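(* Let $\kappa>0$, $p>0$, $\xi(t)=\sqrt\kappa B(t)$ with $B$ a standard Brownian motion, and let $X_s(z)$ be as defined in the context. For every $z\in\mathbb{R}_p$, almost surely $s\mapsto X_s(z)$ is not bounded on $[\pi^2/p,\infty)$.
   Context: For $p>0$ let $\mathbb{S}_p=\{0<\mathrm{Im}\,z<p\}$, $\mathbb{R}_p=ip+\mathbb{R}$. For $r>0$ let $\mathbf{S}_r(z)=\lim_{N\to\infty}\sum_{k=-N}^N\frac{e^{2kr}+z}{e^{2kr}-z}$ and $\mathbf{H}_r(z)=\frac1i\mathbf{S}_r(e^{iz})$. Let $\widetilde\varphi_t$ solve $\partial_t\widetilde\varphi_t(z)=\mathbf{H}_{p-t}(\widetilde\varphi_t(z)-\xi(t))$, $\widetilde\varphi_0(z)=z$ (annulus Loewner maps of modulus $p$ in the covering space); for $z\in\mathbb{R}_p$ the solution exists for all $t\in[0,p)$ and lies on $\mathbb{R}_{p-t}$. For $s\ge\pi^2/p$ and $z\in\mathbb{R}_p$, with $t=p-\pi^2/s$, set $X_s(z)=\frac{\pi}{p-t}\mathrm{Re}\,(\widetilde\varphi_t(z)-\xi(t))$. *)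

theory Defs
  imports "HOL-Probability.Probability"
begin

text \<open>Standard Brownian motion on a probability space M, indexed by times t \<ge> 0:
  B 0 = 0, continuous paths, independent Gaussian increments with
  B t - B s ~ N(0, t - s) for 0 \<le> s < t.  (normal_density mu sigma uses the
  standard deviation sigma.)\<close>
definition standard_BM :: "'w measure \<Rightarrow> (real \<Rightarrow> 'w \<Rightarrow> real) \<Rightarrow> bool" where
  "standard_BM M B \<longleftrightarrow>
     prob_space M \<and>
     (\<forall>t\<ge>0. B t \<in> borel_measurable M) \<and>
     (\<forall>\<omega>\<in>space M. B 0 \<omega> = 0 \<and> continuous_on {0..} (\<lambda>t. B t \<omega>)) \<and>
     (\<forall>s t. 0 \<le> s \<and> s < t \<longrightarrow>
        distributed M lborel (\<lambda>\<omega>. B t \<omega> - B s \<omega>) (normal_density 0 (sqrt (t - s)))) \<and>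
     (\<forall>(ts :: nat \<Rightarrow> real) n. 0 \<le> ts 0 \<and> (\<forall>i<n. ts i < ts (Suc i)) \<longrightarrow>
        prob_space.indep_vars M (\<lambda>_. borel) (\<lambda>i \<omega>. B (ts (Suc i)) \<omega> - B (ts i) \<omega>) {..<n})"

definition S_ann :: "real \<Rightarrow> complex \<Rightarrow> complex" where
  "S_ann r z = lim (\<lambda>N::nat. \<Sum>k\<in>{-int N..int N}.
      (complex_of_real (exp (2 * real_of_int k * r)) + z) /
      (complex_of_real (exp (2 * real_of_int k * r)) - z))"

definition H_ann :: "real \<Rightarrow> complex \<Rightarrow> complex" where
  "H_ann r z = S_ann r (exp (\<i> * z)) / \<i>"

text \<open>X_s(z) = pi/(p-t) Re(phi_t(z) - xi(t)) with t = p - pi^2/s, given the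
  Loewner trajectory phi_traj t = phi_t(z) and driving function xi.\<close>
definition X_proc :: "real \<Rightarrow> (real \<Rightarrow> complex) \<Rightarrow> (real \<Rightarrow> real) \<Rightarrow> real \<Rightarrow> real" where
  "X_proc p phi_traj xi s =
     (let t = p - pi\<^sup>2 / s in pi / (p - t) * Re (phi_traj t - complex_of_real (xi t)))"

end

theory Submission
  imports Defs "HOL-Real_Asymp.Real_Asymp"
begin

(* On the circle |w| = e^-r, the image of the line Im z = r under exp (i z), the terms k and -k-1
   of S_r(w) have opposite real parts, so Re S_r = 1 there and Im H_r = -1 on the line; moreover
   |Re H_r(z)| <= 6 |Re z| / r^2.  Since S_r is Lipschitz near the circle, a Gronwall argument
   keeps the trajectory of a point of R_p on R_(p-t).  If X were bounded, |Re phi_t - xi(t)| would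
   be O(p - t), so the horizontal speed of phi_t would be O(1 / (p - t)) and on each window
   [p - r, p - r + r^2] the driving function would move only by O(r).  But the Brownian increments
   over the disjoint windows of radii r_j = r_0 / 2^j, divided by r_j, are independent standard
   Gaussians, and almost surely they are not all bounded by one constant. *)

section \<open>Convergence and Lipschitz continuity of the annulus kernel\<close>

definition ann_term :: "real \<Rightarrow> complex \<Rightarrow> int \<Rightarrow> complex" where
  "ann_term r w k = (complex_of_real (exp (2 * real_of_int k * r)) + w) /
      (complex_of_real (exp (2 * real_of_int k * r)) - w)"

lemma S_ann_eq_lim: "S_ann r w = lim (\<lambda>N::nat. \<Sum>k\<in>{-int N..int N}. ann_term r w k)"
  unfolding S_ann_def ann_term_def ..

lemma sum_int_symmetric_Suc:
  "(\<Sum>k\<in>{-int (Suc N)..int (Suc N)}. f k) = (\<Sum>k\<in>{-int N..int N}. f k) + f (int (Suc N)) + f (- int (Suc N))"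
proof -
  have "{-int (Suc N)..int (Suc N)} = insert (int (Suc N)) (insert (- int (Suc N)) {-int N..int N})"
    by auto
  then show ?thesis by (simp add: algebra_simps)
qed

lemma sum_int_symmetric:
  "(\<Sum>k\<in>{-int N..int N}. f k) = f 0 + (\<Sum>k<N. f (int (Suc k)) + f (- int (Suc k)))"
proof (induction N)
  case (Suc N)
  show ?case unfolding sum_int_symmetric_Suc Suc.IH by (simp add: algebra_simps)
qed simp

lemma norm_cayley_sub_one_le:
  fixes a w :: "'a::real_normed_field"
  assumes "0 < d" "d \<le> norm (a - w)"
  shows "norm ((a + w) / (a - w) - 1) \<le> 2 * norm w / d"
proof -
  have "a - w \<noteq> 0" using assms by auto
  then have "(a + w) / (a - w) - 1 = 2 * w / (a - w)" by (simp add: field_simps)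
  then show ?thesis
    using assms by (simp add: norm_divide norm_mult frac_le)
qed

lemma norm_cayley_add_one_le:
  fixes a w :: "'a::real_normed_field"
  assumes "0 < d" "d \<le> norm (a - w)"
  shows "norm ((a + w) / (a - w) + 1) \<le> 2 * norm a / d"
proof -
  have "a - w \<noteq> 0" using assms by auto
  then have "(a + w) / (a - w) + 1 = 2 * a / (a - w)" by (simp add: field_simps)
  then show ?thesis
    using assms by (simp add: norm_divide norm_mult frac_le)
qed

lemma norm_cayley_diff_le:
  fixes a w1 w2 :: "'a::real_normed_field"
  assumes "0 < d" "d \<le> norm (a - w1)" "d \<le> norm (a - w2)"
  shows "norm ((a + w1) / (a - w1) - (a + w2) / (a - w2)) \<le> 2 * norm a * norm (w1 - w2) / d\<^sup>2"
proof -
  have "a - w1 \<noteq> 0" "a - w2 \<noteq> 0" using assms by auto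
  then have "(a + w1) / (a - w1) - (a + w2) / (a - w2) = 2 * a * (w1 - w2) / ((a - w1) * (a - w2))"
    by (simp add: field_simps)
  moreover have "d\<^sup>2 \<le> norm (a - w1) * norm (a - w2)"
    unfolding power2_eq_square using assms by (intro mult_mono) auto
  ultimately show ?thesis
    using assms by (simp add: norm_divide norm_mult frac_le)
qed

definition ann_shell :: "real \<Rightarrow> complex set" where
  "ann_shell r = {w. exp (-(3 * r / 2)) \<le> norm w \<and> norm w \<le> exp (-(r / 2))}"

definition ann_gap :: "real \<Rightarrow> real" where
  "ann_gap r = exp (-(3 * r / 2)) * (1 - exp (-(r / 2)))"

lemma ann_gap_pos: "r > 0 \<Longrightarrow> ann_gap r > 0"
  unfolding ann_gap_def by simp

lemma ann_gap_le_norm_diff: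
  assumes r: "r > 0" and w: "w \<in> ann_shell r"
  shows "ann_gap r * max 1 (exp (2 * real_of_int k * r))
    \<le> norm (complex_of_real (exp (2 * real_of_int k * r)) - w)"
proof -
  define a where "a = exp (2 * real_of_int k * r)"
  have "\<bar>a - norm w\<bar> \<le> norm (complex_of_real a - w)"
    using norm_triangle_ineq3[of "complex_of_real a" w] by (simp add: a_def)
  moreover have "ann_gap r * max 1 a \<le> \<bar>a - norm w\<bar>"
  proof (cases "k \<ge> 0")
    case True
    then have "a \<ge> 1" using r by (simp add: a_def)
    moreover have "exp (-(3 * r / 2)) \<le> 1" "exp (-(r / 2)) < 1" using r by auto
    ultimately have "ann_gap r * a \<le> a * (1 - exp (-(r / 2)))"
      unfolding ann_gap_def by (simp add: mult_right_le_one_le)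
    also have "\<dots> \<le> a - norm w"
    proof -
      have "exp (-(r / 2)) \<le> a * exp (-(r / 2))" using \<open>a \<ge> 1\<close> by simp
      moreover have "norm w \<le> exp (-(r / 2))" using w by (simp add: ann_shell_def)
      ultimately have "norm w \<le> a * exp (-(r / 2))" by linarith
      then show ?thesis by (simp add: algebra_simps)
    qed
    finally show ?thesis using \<open>a \<ge> 1\<close> by simp
  next
    case False
    then have "real_of_int k \<le> -1" by simp
    then have "r * real_of_int k \<le> r * (-1)" using r by (intro mult_left_mono) auto
    then have "2 * real_of_int k * r \<le> -2 * r" by simp
    then have "a \<le> exp (-2 * r)" unfolding a_def by simp
    moreover have "exp (-2 * r) \<le> 1" using r by simp
    ultimately have "a \<le> 1" by linarith
    then have "max 1 a = 1" by simp
    have "ann_gap r = exp (-(3 * r / 2)) - exp (-2 * r)"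
      unfolding ann_gap_def by (simp add: algebra_simps flip: exp_add)
    then have "ann_gap r \<le> norm w - a"
      using w \<open>a \<le> exp (-2 * r)\<close> by (simp add: ann_shell_def)
    then show ?thesis using \<open>max 1 a = 1\<close> by simp
  qed
  ultimately show ?thesis unfolding a_def by linarith
qed

lemma ann_shell_norm_le_1: "r > 0 \<Longrightarrow> w \<in> ann_shell r \<Longrightarrow> norm w \<le> 1"
  unfolding ann_shell_def by (auto intro: order_trans[of _ "exp (-(r / 2))"])

lemma exp_neg_pow: "exp (-2 * r) ^ n = exp (- 2 * real n * r)"
  unfolding exp_of_nat_mult[symmetric] by (simp add: algebra_simps)

lemma exp_neg_pow_mult: "exp (-2 * r) ^ n * exp (2 * real n * r) = 1"
  unfolding exp_of_nat_mult[symmetric] exp_add[symmetric] by (simp add: algebra_simps)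

lemma norm_ann_term_sub_one_le:
  assumes r: "r > 0" and w: "w \<in> ann_shell r"
  shows "norm (ann_term r w (int k) - 1) \<le> 2 / ann_gap r * exp (-2 * r) ^ k"
proof -
  define a where "a = exp (2 * real k * r)"
  have a: "a \<ge> 1" using r by (simp add: a_def)
  have "norm w \<le> 1" using r w by (rule ann_shell_norm_le_1)
  have "ann_gap r * a \<le> norm (complex_of_real a - w)"
    using ann_gap_le_norm_diff[OF r w, of "int k"] a by (simp add: a_def)
  then have "norm (ann_term r w (int k) - 1) \<le> 2 * norm w / (ann_gap r * a)"
    unfolding ann_term_def using ann_gap_pos[OF r] a
    by (intro norm_cayley_sub_one_le) (simp_all add: a_def)
  also have "\<dots> \<le> 2 / (ann_gap r * a)"
    using \<open>norm w \<le> 1\<close> ann_gap_pos[OF r] a by (intro divide_right_mono) simp_all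
  also have "\<dots> = 2 / ann_gap r * exp (-2 * r) ^ k"
    using exp_neg_pow_mult[of r k] ann_gap_pos[OF r] by (simp add: a_def field_simps)
  finally show ?thesis .
qed

lemma norm_ann_term_add_one_le:
  assumes r: "r > 0" and w: "w \<in> ann_shell r"
  shows "norm (ann_term r w (- int k) + 1) \<le> 2 / ann_gap r * exp (-2 * r) ^ k"
proof -
  define a where "a = exp (2 * real_of_int (- int k) * r)"
  have a: "a = exp (-2 * r) ^ k" unfolding a_def exp_neg_pow by simp
  have "max 1 a = 1" using r by (simp add: a_def)
  then have "ann_gap r \<le> norm (complex_of_real a - w)"
    using ann_gap_le_norm_diff[OF r w, of "- int k"] by (simp add: a_def)
  then have "norm (ann_term r w (- int k) + 1) \<le> 2 * norm (complex_of_real a) / ann_gap r"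
    unfolding ann_term_def a_def[symmetric] using ann_gap_pos[OF r]
    by (intro norm_cayley_add_one_le) simp_all
  then show ?thesis by (simp add: a norm_power)
qed

lemma norm_ann_term_diff_le:
  assumes r: "r > 0" and w1: "w1 \<in> ann_shell r" and w2: "w2 \<in> ann_shell r"
  shows "norm (ann_term r w1 k - ann_term r w2 k)
    \<le> 2 / (ann_gap r)\<^sup>2 * exp (-2 * r) ^ nat \<bar>k\<bar> * norm (w1 - w2)"
proof -
  define a where "a = exp (2 * real_of_int k * r)"
  define d where "d = ann_gap r * max 1 a"
  have d: "d > 0" using ann_gap_pos[OF r] by (simp add: d_def)
  have "norm (ann_term r w1 k - ann_term r w2 k) \<le> 2 * norm (complex_of_real a) * norm (w1 - w2) / d\<^sup>2"
    unfolding ann_term_def a_def[symmetric] using d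
      ann_gap_le_norm_diff[OF r w1, of k] ann_gap_le_norm_diff[OF r w2, of k]
    by (intro norm_cayley_diff_le) (simp_all add: a_def d_def)
  also have "\<dots> = 2 / (ann_gap r)\<^sup>2 * (a / (max 1 a)\<^sup>2) * norm (w1 - w2)"
    by (simp add: a_def d_def power_mult_distrib)
  also have "a / (max 1 a)\<^sup>2 = exp (-2 * r) ^ nat \<bar>k\<bar>"
  proof (cases "k \<ge> 0")
    case True
    then have "a \<ge> 1" using r by (simp add: a_def)
    then show ?thesis
      using True exp_neg_pow_mult[of r "nat k"] by (simp add: a_def power2_eq_square field_simps)
  next
    case False
    define n where "n = nat (- k)"
    have n: "k = - int n" "nat \<bar>k\<bar> = n" using False by (simp_all add: n_def)
    then have "a \<le> 1" using r by (simp add: a_def)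
    moreover have "a = exp (-2 * r) ^ n" unfolding a_def exp_neg_pow n by simp
    ultimately show ?thesis using n by simp
  qed
  finally show ?thesis .
qed

lemma ann_partial_sums_LIMSEQ:
  assumes r: "r > 0" and w: "w \<in> ann_shell r"
  shows "(\<lambda>N. \<Sum>k\<in>{-int N..int N}. ann_term r w k) \<longlonglongrightarrow> S_ann r w"
proof -
  define P where "P k = ann_term r w (int (Suc k)) + ann_term r w (- int (Suc k))" for k
  have bound: "norm (P k) \<le> 4 / ann_gap r * exp (-2 * r) * exp (-2 * r) ^ k" for k
  proof -
    have "P k = (ann_term r w (int (Suc k)) - 1) + (ann_term r w (- int (Suc k)) + 1)"
      by (simp add: P_def)
    then have "norm (P k) \<le> norm (ann_term r w (int (Suc k)) - 1) + norm (ann_term r w (- int (Suc k)) + 1)"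
      by (metis norm_triangle_ineq)
    then show ?thesis
      using norm_ann_term_sub_one_le[OF r w, of "Suc k"] norm_ann_term_add_one_le[OF r w, of "Suc k"]
      by simp
  qed
  have "summable (\<lambda>k. 4 / ann_gap r * exp (-2 * r) * exp (-2 * r) ^ k)"
    using r by (intro summable_mult summable_geometric) simp
  then have "summable P" using bound by (rule summable_comparison_test')
  then have "(\<lambda>N. ann_term r w 0 + (\<Sum>k<N. P k)) \<longlonglongrightarrow> ann_term r w 0 + suminf P"
    by (intro tendsto_add tendsto_const summable_LIMSEQ)
  then have "convergent (\<lambda>N. \<Sum>k\<in>{-int N..int N}. ann_term r w k)"
    unfolding sum_int_symmetric P_def convergent_def by blast
  then show ?thesis
    unfolding S_ann_eq_lim by (simp add: convergent_LIMSEQ_iff)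
qed

definition ann_lip :: "real \<Rightarrow> real" where
  "ann_lip r = 2 / (ann_gap r)\<^sup>2 * ((1 + exp (-2 * r)) / (1 - exp (-2 * r)))"

lemma ann_lip_nonneg: "r > 0 \<Longrightarrow> ann_lip r \<ge> 0"
  unfolding ann_lip_def by simp

lemma sum_int_symmetric_geometric_le:
  fixes q :: real
  assumes "0 \<le> q" "q < 1"
  shows "(\<Sum>k\<in>{-int N..int N}. q ^ nat \<bar>k\<bar>) \<le> (1 + q) / (1 - q)"
proof -
  have "(\<Sum>k\<in>{-int N..int N}. q ^ nat \<bar>k\<bar>) = 1 + 2 * q * (\<Sum>k<N. q ^ k)"
    unfolding sum_int_symmetric by (simp add: sum_distrib_left nat_add_distrib mult.assoc)
  also have "(\<Sum>k<N. q ^ k) \<le> 1 / (1 - q)"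
    using assms by (simp add: sum_gp_strict divide_right_mono)
  then have "1 + 2 * q * (\<Sum>k<N. q ^ k) \<le> 1 + 2 * q * (1 / (1 - q))"
    using assms by (intro add_left_mono mult_left_mono) simp_all
  also have "\<dots> = (1 + q) / (1 - q)" using assms by (simp add: field_simps)
  finally show ?thesis .
qed

lemma S_ann_lipschitz:
  assumes r: "r > 0" and w1: "w1 \<in> ann_shell r" and w2: "w2 \<in> ann_shell r"
  shows "norm (S_ann r w1 - S_ann r w2) \<le> ann_lip r * norm (w1 - w2)"
proof (rule LIMSEQ_le_const2)
  show "(\<lambda>N. norm ((\<Sum>k\<in>{-int N..int N}. ann_term r w1 k) - (\<Sum>k\<in>{-int N..int N}. ann_term r w2 k)))
      \<longlonglongrightarrow> norm (S_ann r w1 - S_ann r w2)"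
    by (intro tendsto_norm tendsto_diff ann_partial_sums_LIMSEQ r w1 w2)
  have q: "0 \<le> exp (-2 * r)" "exp (-2 * r) < 1" using r by auto
  have "norm ((\<Sum>k\<in>{-int N..int N}. ann_term r w1 k) - (\<Sum>k\<in>{-int N..int N}. ann_term r w2 k))
      \<le> ann_lip r * norm (w1 - w2)" for N
  proof -
    have "norm ((\<Sum>k\<in>{-int N..int N}. ann_term r w1 k) - (\<Sum>k\<in>{-int N..int N}. ann_term r w2 k))
        \<le> (\<Sum>k\<in>{-int N..int N}. norm (ann_term r w1 k - ann_term r w2 k))"
      unfolding sum_subtractf[symmetric] by (rule norm_sum)
    also have "\<dots> \<le> (\<Sum>k\<in>{-int N..int N}. 2 / (ann_gap r)\<^sup>2 * norm (w1 - w2) * exp (-2 * r) ^ nat \<bar>k\<bar>)"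
      using norm_ann_term_diff_le[OF r w1 w2] by (intro sum_mono) (simp add: mult_ac)
    also have "\<dots> \<le> 2 / (ann_gap r)\<^sup>2 * norm (w1 - w2) * ((1 + exp (-2 * r)) / (1 - exp (-2 * r)))"
      unfolding sum_distrib_left[symmetric]
      by (intro mult_left_mono sum_int_symmetric_geometric_le q) simp
    also have "\<dots> = ann_lip r * norm (w1 - w2)"
      unfolding ann_lip_def by (simp only: mult_ac)
    finally show ?thesis .
  qed
  then show "\<exists>N0. \<forall>N\<ge>N0. norm ((\<Sum>k\<in>{-int N..int N}. ann_term r w1 k) - (\<Sum>k\<in>{-int N..int N}. ann_term r w2 k))
      \<le> ann_lip r * norm (w1 - w2)" by blast
qed

section \<open>The kernel on and near the line \<open>Im z = r\<close>\<close>

lemma Re_cayley_cis: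
  "Re ((complex_of_real A + cis y) / (complex_of_real A - cis y)) = (A\<^sup>2 - 1) / (A\<^sup>2 + 1 - 2 * A * cos y)"
proof -
  have "(A - cos y)\<^sup>2 + (sin y)\<^sup>2 = A\<^sup>2 + 1 - 2 * A * cos y"
    using sin_cos_squared_add[of y] by (simp add: power2_eq_square algebra_simps)
  moreover have "(A + cos y) * (A - cos y) - (sin y)\<^sup>2 = A\<^sup>2 - 1"
    using sin_cos_squared_add[of y] by (simp add: power2_eq_square algebra_simps)
  ultimately show ?thesis by (simp add: Re_divide power2_eq_square)
qed

lemma Im_cayley_cis:
  "Im ((complex_of_real A + cis y) / (complex_of_real A - cis y)) = 2 * A * sin y / (A\<^sup>2 + 1 - 2 * A * cos y)"
proof -
  have "(A - cos y)\<^sup>2 + (sin y)\<^sup>2 = A\<^sup>2 + 1 - 2 * A * cos y"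
    using sin_cos_squared_add[of y] by (simp add: power2_eq_square algebra_simps)
  then show ?thesis by (simp add: Im_divide power2_eq_square algebra_simps)
qed

lemma sq_sub_one_le_cayley_denom:
  fixes A y :: real
  shows "A \<ge> 0 \<Longrightarrow> (A - 1)\<^sup>2 \<le> A\<^sup>2 + 1 - 2 * A * cos y"
  using mult_left_mono[OF cos_le_one[of y], of "2 * A"] by (simp add: power2_eq_square algebra_simps)

lemma ann_term_on_line:
  assumes "Im z = r"
  shows "ann_term r (exp (\<i> * z)) k =
    (complex_of_real (exp ((2 * real_of_int k + 1) * r)) + cis (Re z)) /
    (complex_of_real (exp ((2 * real_of_int k + 1) * r)) - cis (Re z))"
proof -
  define A where "A = complex_of_real (exp ((2 * real_of_int k + 1) * r))"
  have w: "exp (\<i> * z) = complex_of_real (exp (- r)) * cis (Re z)"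
    by (subst exp_eq_polar) (simp add: assms)
  have a: "complex_of_real (exp (2 * real_of_int k * r)) = complex_of_real (exp (- r)) * A"
    unfolding A_def by (simp flip: exp_add of_real_mult) (simp add: algebra_simps)
  show ?thesis
    unfolding ann_term_def w a A_def[symmetric]
    by (simp flip: distrib_left right_diff_distrib)
qed

definition cayley_re :: "real \<Rightarrow> real \<Rightarrow> real" where
  "cayley_re c A = (A\<^sup>2 - 1) / (A\<^sup>2 + 1 - 2 * A * c)"

lemma cayley_re_inverse:
  assumes "A > 0"
  shows "cayley_re c (1 / A) = - cayley_re c A"
proof -
  have "(1 / A)\<^sup>2 - 1 = - (A\<^sup>2 - 1) / A\<^sup>2"
    and "(1 / A)\<^sup>2 + 1 - 2 * (1 / A) * c = (A\<^sup>2 + 1 - 2 * A * c) / A\<^sup>2"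
    using assms by (simp_all add: field_simps power2_eq_square)
  then show ?thesis using assms unfolding cayley_re_def by (simp add: minus_divide_left)
qed

lemma Re_ann_term_on_line:
  assumes "Im z = r"
  shows "Re (ann_term r (exp (\<i> * z)) k) = cayley_re (cos (Re z)) (exp ((2 * real_of_int k + 1) * r))"
  unfolding ann_term_on_line[OF assms] Re_cayley_cis cayley_re_def ..

lemma Re_ann_partial_sum_on_line:
  assumes "Im z = r"
  shows "Re (\<Sum>k\<in>{-int N..int N}. ann_term r (exp (\<i> * z)) k)
    = cayley_re (cos (Re z)) (exp ((2 * real N + 1) * r))"
proof (induction N)
  case (Suc N)
  \<comment> \<open>The parameter of the term \<open>k = -(N+1)\<close> is the reciprocal of that of \<open>k = N\<close>,
      so the real parts telescope.\<close>
  have "exp ((2 * real_of_int (- int (Suc N)) + 1) * r) = exp (- ((2 * real N + 1) * r))"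
    by (simp add: algebra_simps)
  also have "\<dots> = 1 / exp ((2 * real N + 1) * r)" by (simp add: exp_minus inverse_eq_divide)
  finally have "Re (ann_term r (exp (\<i> * z)) (- int (Suc N)))
      = - cayley_re (cos (Re z)) (exp ((2 * real N + 1) * r))"
    unfolding Re_ann_term_on_line[OF assms] by (simp add: cayley_re_inverse)
  moreover have "Re (\<Sum>k\<in>{-int (Suc N)..int (Suc N)}. ann_term r (exp (\<i> * z)) k)
      = Re (\<Sum>k\<in>{-int N..int N}. ann_term r (exp (\<i> * z)) k)
        + Re (ann_term r (exp (\<i> * z)) (int (Suc N))) + Re (ann_term r (exp (\<i> * z)) (- int (Suc N)))"
    unfolding sum_int_symmetric_Suc by simp
  ultimately show ?case
    unfolding Suc.IH by (simp add: Re_ann_term_on_line[OF assms] algebra_simps)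
qed (simp add: Re_ann_term_on_line[OF assms])

lemma cayley_re_exp_LIMSEQ:
  assumes "r > 0"
  shows "(\<lambda>N. cayley_re c (exp ((2 * real N + 1) * r))) \<longlonglongrightarrow> 1"
  unfolding cayley_re_def using assms by real_asymp

lemma exp_mult_sq_le:
  fixes a :: real
  shows "exp a * a\<^sup>2 \<le> (exp a - 1)\<^sup>2"
proof -
  have "\<bar>a / 2\<bar> \<le> \<bar>(exp (a / 2) - exp (- (a / 2))) / 2\<bar>"
    using real_le_abs_sinh[of "a / 2"] by (simp add: exp_minus)
  then have "a\<^sup>2 \<le> (exp (a / 2) - exp (- (a / 2)))\<^sup>2"
    by (simp add: abs_le_square_iff power_divide)
  then have "exp a * a\<^sup>2 \<le> exp a * (exp (a / 2) - exp (- (a / 2)))\<^sup>2"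
    by (simp add: mult_left_mono)
  also have "\<dots> = (exp (a / 2) * (exp (a / 2) - exp (- (a / 2))))\<^sup>2"
    by (simp add: power_mult_distrib power2_eq_square flip: exp_add)
  also have "\<dots> = (exp a - 1)\<^sup>2"
    by (simp add: right_diff_distrib flip: exp_add)
  finally show ?thesis .
qed

lemma abs_Im_ann_term_on_line_le:
  assumes r: "r > 0" and z: "Im z = r"
  shows "\<bar>Im (ann_term r (exp (\<i> * z)) k)\<bar> \<le> 2 * \<bar>Re z\<bar> / ((2 * real_of_int k + 1) * r)\<^sup>2"
proof -
  define \<alpha> where "\<alpha> = (2 * real_of_int k + 1) * r"
  define A where "A = exp \<alpha>"
  define D where "D = A\<^sup>2 + 1 - 2 * A * cos (Re z)"
  have "2 * k + 1 \<noteq> 0" by presburger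
  then have "\<alpha> \<noteq> 0" using r unfolding \<alpha>_def by simp
  have A: "A > 0" by (simp add: A_def)
  have "A * \<alpha>\<^sup>2 \<le> D"
    using exp_mult_sq_le[of \<alpha>] sq_sub_one_le_cayley_denom[of A "Re z"] A
    unfolding A_def D_def by linarith
  moreover have "A * \<alpha>\<^sup>2 > 0" using A \<open>\<alpha> \<noteq> 0\<close> by simp
  ultimately have "\<bar>Im (ann_term r (exp (\<i> * z)) k)\<bar> = 2 * A * \<bar>sin (Re z)\<bar> / D"
    unfolding ann_term_on_line[OF z] Im_cayley_cis using A
    by (simp add: A_def \<alpha>_def D_def abs_mult)
  also have "\<dots> \<le> 2 * A * \<bar>Re z\<bar> / (A * \<alpha>\<^sup>2)"
    using A \<open>A * \<alpha>\<^sup>2 \<le> D\<close> \<open>A * \<alpha>\<^sup>2 > 0\<close> abs_sin_x_le_abs_x[of "Re z"]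
    by (intro frac_le mult_left_mono) auto
  also have "\<dots> = 2 * \<bar>Re z\<bar> / \<alpha>\<^sup>2" using A by simp
  finally show ?thesis unfolding \<alpha>_def .
qed

lemma sum_inverse_odd_squares_le:
  "(\<Sum>k\<in>{-int N..int N}. 1 / (2 * real_of_int k + 1)\<^sup>2) \<le> 3 - 2 / (2 * real N + 1)"
proof (induction N)
  case (Suc N)
  define u where "u = 2 * real N + 1"
  have u: "u \<ge> 1" by (simp add: u_def)
  have "1 / (u + 2)\<^sup>2 + 1 / u\<^sup>2 \<le> 2 / u - 2 / (u + 2)"
  proof -
    have "u\<^sup>2 + (u + 2)\<^sup>2 = 4 * u * (u + 2) - (2 * u\<^sup>2 + 4 * u - 4)"
      by (simp add: power2_eq_square algebra_simps)
    moreover have "0 \<le> u\<^sup>2" by simp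
    ultimately have "u\<^sup>2 + (u + 2)\<^sup>2 \<le> 4 * u * (u + 2)" using u by linarith
    then have "(u\<^sup>2 + (u + 2)\<^sup>2) / (u\<^sup>2 * (u + 2)\<^sup>2) \<le> 4 * u * (u + 2) / (u\<^sup>2 * (u + 2)\<^sup>2)"
      by (rule divide_right_mono) simp
    moreover have "1 / (u + 2)\<^sup>2 + 1 / u\<^sup>2 = (u\<^sup>2 + (u + 2)\<^sup>2) / (u\<^sup>2 * (u + 2)\<^sup>2)"
      and "4 * u * (u + 2) / (u\<^sup>2 * (u + 2)\<^sup>2) = 2 / u - 2 / (u + 2)"
      using u by (simp_all add: divide_simps power2_eq_square)
    ultimately show ?thesis by simp
  qed
  moreover have "1 / (2 * real_of_int (int (Suc N)) + 1)\<^sup>2 = 1 / (u + 2)\<^sup>2"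
    and "1 / (2 * real_of_int (- int (Suc N)) + 1)\<^sup>2 = 1 / u\<^sup>2"
    by (simp_all add: u_def power2_eq_square algebra_simps)
  moreover have "3 - 2 / (2 * real (Suc N) + 1) = 3 - 2 / (u + 2)" by (simp add: u_def)
  ultimately show ?case
    using Suc.IH unfolding sum_int_symmetric_Suc u_def[symmetric] by linarith
qed simp

lemma exp_in_ann_shell:
  assumes "\<bar>Im z - r\<bar> \<le> r / 2"
  shows "exp (\<i> * z) \<in> ann_shell r"
proof -
  have "r / 2 \<le> Im z" "Im z \<le> 3 * r / 2" using assms unfolding abs_le_iff by linarith+
  then show ?thesis by (simp add: ann_shell_def)
qed

lemma S_ann_on_line:
  assumes r: "r > 0" and z: "Im z = r"
  shows "Re (S_ann r (exp (\<i> * z))) = 1"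
    and "\<bar>Im (S_ann r (exp (\<i> * z)))\<bar> \<le> 6 * \<bar>Re z\<bar> / r\<^sup>2"
proof -
  let ?s = "\<lambda>N. \<Sum>k\<in>{-int N..int N}. ann_term r (exp (\<i> * z)) k"
  have lim: "?s \<longlonglongrightarrow> S_ann r (exp (\<i> * z))"
    using r z by (intro ann_partial_sums_LIMSEQ exp_in_ann_shell) auto
  have "(\<lambda>N. Re (?s N)) \<longlonglongrightarrow> 1"
    unfolding Re_ann_partial_sum_on_line[OF z] using r by (rule cayley_re_exp_LIMSEQ)
  then show "Re (S_ann r (exp (\<i> * z))) = 1"
    using tendsto_Re[OF lim] LIMSEQ_unique by blast
  have "\<bar>Im (?s N)\<bar> \<le> 6 * \<bar>Re z\<bar> / r\<^sup>2" for N
  proof -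
    have "\<bar>Im (?s N)\<bar> \<le> (\<Sum>k\<in>{-int N..int N}. \<bar>Im (ann_term r (exp (\<i> * z)) k)\<bar>)"
      unfolding Im_sum by (rule sum_abs)
    also have "\<dots> \<le> (\<Sum>k\<in>{-int N..int N}. 2 * \<bar>Re z\<bar> / r\<^sup>2 * (1 / (2 * real_of_int k + 1)\<^sup>2))"
      using abs_Im_ann_term_on_line_le[OF r z] by (intro sum_mono) (simp add: power_mult_distrib mult.commute)
    also have "\<dots> \<le> 2 * \<bar>Re z\<bar> / r\<^sup>2 * 3"
      unfolding sum_distrib_left[symmetric] using sum_inverse_odd_squares_le[of N]
      by (intro mult_left_mono) (simp_all add: order_trans)
    finally show ?thesis by simp
  qed
  then show "\<bar>Im (S_ann r (exp (\<i> * z)))\<bar> \<le> 6 * \<bar>Re z\<bar> / r\<^sup>2"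
    by (intro LIMSEQ_le_const2[OF tendsto_rabs[OF tendsto_Im[OF lim]]]) auto
qed

lemma H_ann_eq: "H_ann r z = - \<i> * S_ann r (exp (\<i> * z))"
  unfolding H_ann_def by (simp add: divide_complex_def)

lemma H_ann_on_line:
  assumes "r > 0" "Im z = r"
  shows "Im (H_ann r z) = -1" and "\<bar>Re (H_ann r z)\<bar> \<le> 6 * \<bar>Re z\<bar> / r\<^sup>2"
  using S_ann_on_line[OF assms] by (simp_all add: H_ann_eq)

lemma abs_exp_diff_le_nonpos:
  fixes a b :: real
  assumes "a \<le> 0" "b \<le> 0"
  shows "\<bar>exp a - exp b\<bar> \<le> \<bar>a - b\<bar>"
proof -
  have "norm (exp a - exp b) \<le> 1 * norm (a - b)"
  proof (rule field_differentiable_bound[of "{..0}"])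
    show "\<And>x. x \<in> {..0} \<Longrightarrow> (exp has_field_derivative exp x) (at x within {..0})"
      by (auto intro: DERIV_subset DERIV_exp)
  qed (use assms in auto)
  then show ?thesis by simp
qed

lemma Im_H_ann_near_line:
  assumes r: "r > 0" and z: "\<bar>Im z - r\<bar> \<le> r / 2"
  shows "\<bar>Im (H_ann r z) + 1\<bar> \<le> ann_lip r * \<bar>Im z - r\<bar>"
proof -
  define z0 where "z0 = Complex (Re z) r"
  have "Im (H_ann r z0) = -1" using H_ann_on_line(1)[OF r] by (simp add: z0_def)
  then have "\<bar>Im (H_ann r z) + 1\<bar> = \<bar>Re (S_ann r (exp (\<i> * z)) - S_ann r (exp (\<i> * z0)))\<bar>"
    by (simp add: H_ann_eq)
  also have "\<dots> \<le> norm (S_ann r (exp (\<i> * z)) - S_ann r (exp (\<i> * z0)))"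
    by (rule abs_Re_le_cmod)
  also have "\<dots> \<le> ann_lip r * norm (exp (\<i> * z) - exp (\<i> * z0))"
    using r z by (intro S_ann_lipschitz exp_in_ann_shell) (simp_all add: z0_def)
  also have "norm (exp (\<i> * z) - exp (\<i> * z0)) = \<bar>exp (- Im z) - exp (- r)\<bar>"
  proof -
    have "exp (\<i> * z) = complex_of_real (exp (- Im z)) * cis (Re z)"
      and "exp (\<i> * z0) = complex_of_real (exp (- r)) * cis (Re z)"
      by (subst exp_eq_polar, simp add: z0_def)+
    then have "exp (\<i> * z) - exp (\<i> * z0) = complex_of_real (exp (- Im z) - exp (- r)) * cis (Re z)"
      by (simp add: algebra_simps)
    then show ?thesis by (simp add: norm_mult del: of_real_diff)
  qed
  also have "\<bar>exp (- Im z) - exp (- r)\<bar> \<le> \<bar>Im z - r\<bar>"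
  proof -
    have "Im z \<ge> 0" using r z unfolding abs_le_iff by linarith
    then show ?thesis
      using abs_exp_diff_le_nonpos[of "- Im z" "- r"] r by (simp add: abs_minus_commute)
  qed
  finally show ?thesis
    using ann_lip_nonneg[OF r] by (simp add: mult_left_mono)
qed

section \<open>Loewner trajectories starting on the line\<close>

lemma ann_lip_bounded:
  assumes "0 < a"
  obtains L where "\<And>r. r \<in> {a..b} \<Longrightarrow> ann_lip r \<le> L"
proof -
  have "continuous_on {a..b} ann_lip"
    unfolding ann_lip_def ann_gap_def using assms by (intro continuous_intros) auto
  then have "bounded (ann_lip ` {a..b})"
    by (intro compact_imp_bounded compact_continuous_image) auto
  then obtain L where "\<forall>r\<in>{a..b}. \<bar>ann_lip r\<bar> \<le> L" unfolding bounded_real by blast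
  then show ?thesis using that abs_le_D1 by blast
qed

lemma gronwall_zero:
  fixes f f' :: "real \<Rightarrow> real"
  assumes "a \<le> b" and cont: "continuous_on {a..b} f" and "f a = 0"
    and deriv: "\<And>t. t \<in> {a<..<b} \<Longrightarrow> (f has_real_derivative f' t) (at t)"
    and bound: "\<And>t. t \<in> {a<..<b} \<Longrightarrow> \<bar>f' t\<bar> \<le> L * \<bar>f t\<bar>"
  shows "f b = 0"
proof -
  define \<psi> where "\<psi> u = exp (- 2 * L * u) * (f u)\<^sup>2" for u
  have "\<psi> b \<le> \<psi> a"
  proof (rule DERIV_nonpos_imp_decreasing_open[OF \<open>a \<le> b\<close>])
    show "continuous_on {a..b} \<psi>" unfolding \<psi>_def by (intro continuous_intros cont)
    fix t assume t: "a < t" "t < b"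
    have "(\<psi> has_real_derivative exp (- 2 * L * t) * (2 * (f t * f' t - L * (f t)\<^sup>2))) (at t)"
      unfolding \<psi>_def using deriv t
      by (auto intro!: derivative_eq_intros simp: power2_eq_square algebra_simps)
    moreover have "f t * f' t \<le> L * (f t)\<^sup>2"
    proof -
      have "f t * f' t \<le> \<bar>f t\<bar> * \<bar>f' t\<bar>" by (simp flip: abs_mult)
      also have "\<dots> \<le> \<bar>f t\<bar> * (L * \<bar>f t\<bar>)" using bound t by (intro mult_left_mono) auto
      also have "\<dots> = L * (f t)\<^sup>2" by (simp add: power2_eq_square abs_mult_self_eq)
      finally show ?thesis .
    qed
    ultimately show "\<exists>y. (\<psi> has_real_derivative y) (at t) \<and> y \<le> 0"
      by (intro exI conjI) (auto simp: mult_nonneg_nonpos)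
  qed
  then have "(f b)\<^sup>2 \<le> 0" using \<open>f a = 0\<close> by (simp add: \<psi>_def mult_le_0_iff)
  then show ?thesis by simp
qed

lemma gronwall_zero_local:
  fixes f f' :: "real \<Rightarrow> real"
  assumes "a \<le> b" and cont: "continuous_on {a..b} f" and "f a = 0" and "\<delta> > 0"
    and deriv: "\<And>t. t \<in> {a<..<b} \<Longrightarrow> (f has_real_derivative f' t) (at t)"
    and bound: "\<And>t. t \<in> {a<..<b} \<Longrightarrow> \<bar>f t\<bar> \<le> \<delta> \<Longrightarrow> \<bar>f' t\<bar> \<le> L * \<bar>f t\<bar>"
  shows "f b = 0"
proof (rule ccontr)
  assume "f b \<noteq> 0"
  define \<eta> where "\<eta> = min \<delta> \<bar>f b\<bar>"
  define K where "K = {s \<in> {a..b}. \<eta> \<le> \<bar>f s\<bar>}"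
  have \<eta>: "0 < \<eta>" "\<eta> \<le> \<delta>" using \<open>\<delta> > 0\<close> \<open>f b \<noteq> 0\<close> by (auto simp: \<eta>_def)
  have "closed K"
    unfolding K_def by (intro continuous_on_closed_Collect_le continuous_intros cont closed_atLeastAtMost)
  moreover have "b \<in> K" "bdd_below K" using \<open>a \<le> b\<close> by (auto simp: K_def \<eta>_def bdd_below_def)
  ultimately have "Inf K \<in> K" using closed_contains_Inf by blast
  define s where "s = Inf K"
  have s: "a \<le> s" "s \<le> b" "\<eta> \<le> \<bar>f s\<bar>" using \<open>Inf K \<in> K\<close> by (auto simp: s_def K_def)
  have below: "\<bar>f t\<bar> < \<eta>" if "a \<le> t" "t < s" for t
    using cInf_lower[OF _ \<open>bdd_below K\<close>, of t] that s by (force simp: K_def s_def)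
  have "f s = 0"
  proof (rule gronwall_zero[of a s f])
    show "continuous_on {a..s} f" using s by (intro continuous_on_subset[OF cont]) auto
    show "\<And>t. t \<in> {a<..<s} \<Longrightarrow> (f has_real_derivative f' t) (at t)" using deriv s by auto
    fix t assume "t \<in> {a<..<s}"
    then show "\<bar>f' t\<bar> \<le> L * \<bar>f t\<bar>"
      using bound[of t] below[of t] \<eta> s by auto
  qed (use s \<open>f a = 0\<close> in auto)
  then show False using s \<eta> by simp
qed

definition ann_loewner_traj :: "real \<Rightarrow> (real \<Rightarrow> real) \<Rightarrow> (real \<Rightarrow> complex) \<Rightarrow> bool" where
  "ann_loewner_traj p xi phi \<longleftrightarrow> (\<forall>t\<in>{0..<p}.
     (phi has_vector_derivative H_ann (p - t) (phi t - complex_of_real (xi t))) (at t within {0..<p}))"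

lemma ann_loewner_traj_continuous:
  "ann_loewner_traj p xi phi \<Longrightarrow> continuous_on {0..<p} phi"
  unfolding ann_loewner_traj_def continuous_on_eq_continuous_within
  using has_vector_derivative_continuous by blast

lemma ann_loewner_traj_has_vector_derivative_at:
  assumes "ann_loewner_traj p xi phi" "t \<in> {0<..<p}"
  shows "(phi has_vector_derivative H_ann (p - t) (phi t - complex_of_real (xi t))) (at t)"
proof -
  have "(phi has_vector_derivative H_ann (p - t) (phi t - complex_of_real (xi t))) (at t within {0..<p})"
    using assms unfolding ann_loewner_traj_def by auto
  moreover have "at t within {0..<p} = at t"
    using assms(2) by (intro at_within_open_subset[of t "{0<..<p}"]) auto
  ultimately show ?thesis by simp
qed

lemma Im_ann_loewner_traj:
  assumes traj: "ann_loewner_traj p xi phi" and phi0: "Im (phi 0) = p" and t0: "t0 \<in> {0..<p}"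
  shows "Im (phi t0) = p - t0"
proof -
  obtain L where L: "\<And>r. r \<in> {p - t0..p} \<Longrightarrow> ann_lip r \<le> L"
    using ann_lip_bounded[of "p - t0"] t0 by auto
  define f where "f t = Im (phi t) - (p - t)" for t
  have "f t0 = 0"
  proof (rule gronwall_zero_local[where a = 0 and b = t0 and f = f and \<delta> = "(p - t0) / 2" and L = L
        and f' = "\<lambda>t. Im (H_ann (p - t) (phi t - complex_of_real (xi t))) + 1"])
    show "continuous_on {0..t0} f" unfolding f_def using t0
      by (intro continuous_intros continuous_on_subset[OF ann_loewner_traj_continuous[OF traj]]) auto
    show "(f has_real_derivative Im (H_ann (p - t) (phi t - complex_of_real (xi t))) + 1) (at t)"
      if "t \<in> {0<..<t0}" for t
      unfolding f_def using ann_loewner_traj_has_vector_derivative_at[OF traj, of t] that t0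
      by (auto intro!: derivative_eq_intros)
    show "\<bar>Im (H_ann (p - t) (phi t - complex_of_real (xi t))) + 1\<bar> \<le> L * \<bar>f t\<bar>"
      if "t \<in> {0<..<t0}" "\<bar>f t\<bar> \<le> (p - t0) / 2" for t
    proof -
      have near: "\<bar>Im (phi t - complex_of_real (xi t)) - (p - t)\<bar> \<le> (p - t) / 2"
        using that t0 by (simp add: f_def)
      have "\<bar>Im (H_ann (p - t) (phi t - complex_of_real (xi t))) + 1\<bar> \<le> ann_lip (p - t) * \<bar>f t\<bar>"
        using Im_H_ann_near_line[OF _ near] that t0 by (simp add: f_def)
      also have "\<dots> \<le> L * \<bar>f t\<bar>" using L[of "p - t"] that t0 by (intro mult_right_mono) auto
      finally show ?thesis .
    qed
  qed (use t0 phi0 in \<open>auto simp: f_def\<close>)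
  then show ?thesis by (simp add: f_def)
qed

lemma ann_loewner_traj_Re_speed_le:
  assumes traj: "ann_loewner_traj p xi phi" and phi0: "Im (phi 0) = p"
    and M: "\<And>t. t \<in> {0..<p} \<Longrightarrow> \<bar>Re (phi t) - xi t\<bar> \<le> M * (p - t)"
    and s: "s \<in> {0..<p}"
  shows "\<bar>Re (H_ann (p - s) (phi s - complex_of_real (xi s)))\<bar> \<le> 6 * M / (p - s)"
proof -
  have "Im (phi s - complex_of_real (xi s)) = p - s" using Im_ann_loewner_traj[OF traj phi0 s] by simp
  then have "\<bar>Re (H_ann (p - s) (phi s - complex_of_real (xi s)))\<bar> \<le> 6 * \<bar>Re (phi s) - xi s\<bar> / (p - s)\<^sup>2"
    using H_ann_on_line(2)[of "p - s" "phi s - complex_of_real (xi s)"] s by simp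
  also have "\<dots> \<le> 6 * (M * (p - s)) / (p - s)\<^sup>2"
    using M[OF s] by (intro divide_right_mono mult_left_mono) auto
  also have "\<dots> = 6 * M / (p - s)" using s by (simp add: power2_eq_square)
  finally show ?thesis .
qed

lemma ann_loewner_window_increment:
  assumes traj: "ann_loewner_traj p xi phi" and phi0: "Im (phi 0) = p"
    and M: "\<And>t. t \<in> {0..<p} \<Longrightarrow> \<bar>Re (phi t) - xi t\<bar> \<le> M * (p - t)"
    and r: "0 < r" "r \<le> 1 / 4" "r \<le> p"
  shows "\<bar>xi (p - r + r\<^sup>2) - xi (p - r)\<bar> \<le> 10 * M * r"
proof -
  define W where "W = {p - r..p - r + r\<^sup>2}"
  have r2: "r\<^sup>2 \<le> r / 4" using r by (simp add: power2_eq_square)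
  have W: "W \<subseteq> {0..<p}" "\<And>s. s \<in> W \<Longrightarrow> 3 * r / 4 \<le> p - s"
    using r r2 by (auto simp: W_def)
  have "0 \<le> M * p" using M[of 0] r by (simp add: order_trans[OF abs_ge_zero])
  then have "M \<ge> 0" using r by (simp add: zero_le_mult_iff)
  have "norm (Re (phi (p - r + r\<^sup>2)) - Re (phi (p - r))) \<le> 8 * M / r * norm ((p - r + r\<^sup>2) - (p - r))"
  proof (rule field_differentiable_bound[of W])
    fix s assume s: "s \<in> W"
    then have s': "s \<in> {0..<p}" using W by auto
    then have "(phi has_vector_derivative H_ann (p - s) (phi s - complex_of_real (xi s))) (at s within W)"
      using traj W unfolding ann_loewner_traj_def by (blast intro: has_vector_derivative_within_subset)
    then show "((\<lambda>t. Re (phi t)) has_field_derivative Re (H_ann (p - s) (phi s - complex_of_real (xi s))))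
        (at s within W)"
      by (rule has_field_derivative_Re)
    have "\<bar>Re (H_ann (p - s) (phi s - complex_of_real (xi s)))\<bar> \<le> 6 * M / (p - s)"
      by (rule ann_loewner_traj_Re_speed_le[OF traj phi0 M s'])
    also have "\<dots> \<le> 6 * M / (3 * r / 4)"
      using W(2)[OF s] r \<open>M \<ge> 0\<close> by (intro divide_left_mono) auto
    finally show "norm (Re (H_ann (p - s) (phi s - complex_of_real (xi s)))) \<le> 8 * M / r" by simp
  qed (use r in \<open>auto simp: W_def\<close>)
  also have "\<dots> = 8 * M * r" using r by (simp add: power2_eq_square)
  finally have "\<bar>Re (phi (p - r + r\<^sup>2)) - Re (phi (p - r))\<bar> \<le> 8 * M * r" by simp
  moreover have "\<bar>Re (phi (p - r + r\<^sup>2)) - xi (p - r + r\<^sup>2)\<bar> \<le> M * r"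
  proof -
    have "\<bar>Re (phi (p - r + r\<^sup>2)) - xi (p - r + r\<^sup>2)\<bar> \<le> M * (r - r\<^sup>2)"
      using M[of "p - r + r\<^sup>2"] r r2 by simp
    also have "\<dots> \<le> M * r" using \<open>M \<ge> 0\<close> by (intro mult_left_mono) auto
    finally show ?thesis .
  qed
  moreover have "\<bar>Re (phi (p - r)) - xi (p - r)\<bar> \<le> M * r" using M[of "p - r"] r by simp
  ultimately show ?thesis by linarith
qed

lemma X_proc_bounded_imp_Re_bound:
  assumes p: "p > 0" and bdd: "bounded ((\<lambda>s. X_proc p phi xi s) ` {pi\<^sup>2 / p..})"
  obtains M where "\<And>t. t \<in> {0..<p} \<Longrightarrow> \<bar>Re (phi t) - xi t\<bar> \<le> M * (p - t)"
proof -
  obtain K where K: "\<forall>s\<in>{pi\<^sup>2 / p..}. \<bar>X_proc p phi xi s\<bar> \<le> K"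
    using bdd unfolding bounded_real by auto
  have "\<bar>Re (phi t) - xi t\<bar> \<le> K / pi * (p - t)" if t: "t \<in> {0..<p}" for t
  proof -
    define s where "s = pi\<^sup>2 / (p - t)"
    have "s \<in> {pi\<^sup>2 / p..}" using t p by (auto simp: s_def intro!: divide_left_mono)
    moreover have "X_proc p phi xi s = pi / (p - t) * (Re (phi t) - xi t)"
      using t by (simp add: X_proc_def s_def)
    ultimately have "pi / (p - t) * \<bar>Re (phi t) - xi t\<bar> \<le> K"
      using K t by (force simp: abs_mult)
    then show ?thesis using t by (simp add: field_simps)
  qed
  then show ?thesis by (rule that)
qed

section \<open>Brownian increments over disjoint windows\<close>

lemma std_normal_interval_lt_1:
  "measure std_normal_distribution {-c..c} < 1"
proof -
  define N where "N = std_normal_distribution"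
  interpret N: real_distribution N unfolding N_def by (rule real_dist_normal_dist)
  define \<epsilon> where "\<epsilon> = std_normal_density (\<bar>c\<bar> + 1)"
  have "\<epsilon> > 0" by (simp add: \<epsilon>_def std_normal_density_def)
  have "ennreal \<epsilon> * indicator {\<bar>c\<bar><..\<bar>c\<bar>+1} x \<le> ennreal (std_normal_density x) * indicator {\<bar>c\<bar><..\<bar>c\<bar>+1} x" for x
  proof (cases "x \<in> {\<bar>c\<bar><..\<bar>c\<bar>+1}")
    case True
    then have "x\<^sup>2 \<le> (\<bar>c\<bar> + 1)\<^sup>2" by (intro power_mono) auto
    then have "\<epsilon> \<le> std_normal_density x"
      unfolding \<epsilon>_def std_normal_density_def by (intro mult_left_mono) auto
    then show ?thesis using True by (simp add: ennreal_leI)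
  qed simp
  then have "(\<integral>\<^sup>+ x. ennreal \<epsilon> * indicator {\<bar>c\<bar><..\<bar>c\<bar>+1} x \<partial>lborel)
      \<le> (\<integral>\<^sup>+ x. ennreal (std_normal_density x) * indicator {\<bar>c\<bar><..\<bar>c\<bar>+1} x \<partial>lborel)"
    by (rule nn_integral_mono)
  then have "ennreal \<epsilon> \<le> emeasure N {\<bar>c\<bar><..\<bar>c\<bar>+1}"
    unfolding N_def by (simp add: emeasure_density nn_integral_cmult_indicator)
  then have "0 < measure N {\<bar>c\<bar><..\<bar>c\<bar>+1}"
    using \<open>\<epsilon> > 0\<close> by (simp add: N.emeasure_eq_measure ennreal_le_iff)
  moreover have "{-c..c} \<inter> {\<bar>c\<bar><..\<bar>c\<bar>+1} = {}" by auto
  then have "measure N {-c..c} + measure N {\<bar>c\<bar><..\<bar>c\<bar>+1} \<le> 1"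
    using N.finite_measure_Union[of "{-c..c}" "{\<bar>c\<bar><..\<bar>c\<bar>+1}"] N.prob_le_1[of "{-c..c} \<union> {\<bar>c\<bar><..\<bar>c\<bar>+1}"]
    by (simp add: N_def)
  ultimately show ?thesis unfolding N_def by simp
qed

lemma standard_BM_increment_prob:
  assumes BM: "standard_BM M B" and st: "0 \<le> s" "s < t"
  shows "measure M {\<omega> \<in> space M. \<bar>B t \<omega> - B s \<omega>\<bar> \<le> c * sqrt (t - s)}
    = measure std_normal_distribution {-c..c}"
proof -
  define \<sigma> where "\<sigma> = sqrt (t - s)"
  define Z where "Z \<omega> = (B t \<omega> - B s \<omega>) / \<sigma>" for \<omega>
  have "\<sigma> > 0" using st by (simp add: \<sigma>_def)
  have ps: "prob_space M"
    and "distributed M lborel (\<lambda>\<omega>. B t \<omega> - B s \<omega>) (normal_density 0 \<sigma>)"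
    using BM st unfolding standard_BM_def \<sigma>_def by blast+
  then have "distributed M lborel Z std_normal_density"
    unfolding Z_def
    using prob_space.normal_standard_normal_convert[OF ps \<open>\<sigma> > 0\<close>, where X = "\<lambda>\<omega>. B t \<omega> - B s \<omega>" and \<mu> = 0]
    by simp
  then have Z: "Z \<in> measurable M lborel" "distr M lborel Z = std_normal_distribution"
    unfolding distributed_def by auto
  have "{\<omega> \<in> space M. \<bar>B t \<omega> - B s \<omega>\<bar> \<le> c * \<sigma>} = Z -` {-c..c} \<inter> space M"
    using \<open>\<sigma> > 0\<close> by (auto simp: Z_def abs_le_iff field_simps)
  then show ?thesis
    using measure_distr[OF Z(1), of "{-c..c}"] Z(2) by (simp add: \<sigma>_def)
qed

lemma standard_BM_windows_indep:
  fixes c :: real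
  assumes BM: "standard_BM M B" and a0: "0 \<le> a 0"
    and ab: "\<And>j. a j < b j" and ba: "\<And>j. b j < a (Suc j)" and N: "N \<noteq> 0"
  defines "E j \<equiv> {\<omega> \<in> space M. \<bar>B (b j) \<omega> - B (a j) \<omega>\<bar> \<le> c * sqrt (b j - a j)}"
  shows "measure M (\<Inter>j<N. E j) = (\<Prod>j<N. measure M (E j))"
proof -
  interpret prob_space M using BM by (simp add: standard_BM_def)
  define ts where "ts i = (if even i then a (i div 2) else b (i div 2))" for i
  have ts_even: "ts (2 * j) = a j" and ts_odd: "ts (Suc (2 * j)) = b j" for j
    by (simp_all add: ts_def)
  have ts_Suc: "ts i < ts (Suc i)" for i
  proof (cases "even i")
    case True
    then obtain j where "i = 2 * j" by (rule evenE)
    then show ?thesis by (simp add: ts_even ts_odd ab)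
  next
    case False
    then obtain j where "i = Suc (2 * j)" by (auto elim: oddE)
    moreover have "Suc (Suc (2 * j)) = 2 * Suc j" by simp
    ultimately show ?thesis using ba[of j] by (simp only: ts_even ts_odd)
  qed
  have indep: "\<forall>(ts :: nat \<Rightarrow> real) n. 0 \<le> ts 0 \<and> (\<forall>i<n. ts i < ts (Suc i)) \<longrightarrow>
      indep_vars (\<lambda>_. borel) (\<lambda>i \<omega>. B (ts (Suc i)) \<omega> - B (ts i) \<omega>) {..<n}"
    using BM unfolding standard_BM_def by (elim conjE)
  define X where "X i \<omega> = B (ts (Suc i)) \<omega> - B (ts i) \<omega>" for i \<omega>
  define I where "I i = {- (c * sqrt (ts (Suc i) - ts i))..c * sqrt (ts (Suc i) - ts i)}" for i
  have XE: "X (2 * j) -` I (2 * j) \<inter> space M = E j" for j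
    unfolding X_def I_def ts_even ts_odd E_def by (auto simp: abs_le_iff)
  have "indep_vars (\<lambda>_. borel) X {..<2 * N}"
    unfolding X_def by (rule indep[rule_format]) (use a0 ts_Suc in \<open>simp add: ts_def\<close>)
  then have "prob (\<Inter>i\<in>(*) 2 ` {..<N}. X i -` I i \<inter> space M)
      = (\<Prod>i\<in>(*) 2 ` {..<N}. prob (X i -` I i \<inter> space M))"
    by (rule indep_varsD) (use N in \<open>auto simp: I_def\<close>)
  moreover have "inj_on ((*) (2::nat)) {..<N}" by (simp add: inj_on_def)
  ultimately show ?thesis by (simp add: image_image prod.reindex XE)
qed

lemma standard_BM_windows_null:
  fixes c :: real
  assumes BM: "standard_BM M B" and a0: "0 \<le> a 0"
    and ab: "\<And>j. a j < b j" and ba: "\<And>j. b j < a (Suc j)"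
  shows "(\<Inter>j. {\<omega> \<in> space M. \<bar>B (b j) \<omega> - B (a j) \<omega>\<bar> \<le> c * sqrt (b j - a j)}) \<in> null_sets M"
proof -
  interpret prob_space M using BM by (simp add: standard_BM_def)
  define E where "E j = {\<omega> \<in> space M. \<bar>B (b j) \<omega> - B (a j) \<omega>\<bar> \<le> c * sqrt (b j - a j)}" for j
  define Q where "Q = measure std_normal_distribution {-c..c}"
  have "0 \<le> a j" for j
  proof (induction j)
    case (Suc j)
    then show ?case using ab[of j] ba[of j] by linarith
  qed (rule a0)
  then have E_prob: "prob (E j) = Q" for j
    unfolding E_def Q_def using ab by (intro standard_BM_increment_prob[OF BM]) auto
  have E_sets: "E j \<in> events" for j
  proof -
    have "B t \<in> borel_measurable M" if "t \<ge> 0" for t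
      using BM that unfolding standard_BM_def by blast
    then have "(\<lambda>\<omega>. B (b j) \<omega> - B (a j) \<omega>) \<in> borel_measurable M"
      using \<open>0 \<le> a j\<close> ab[of j] by (intro borel_measurable_diff) auto
    then show ?thesis unfolding E_def by measurable
  qed
  have "prob (\<Inter>j. E j) \<le> Q ^ N" for N
  proof (cases "N = 0")
    case False
    then have "prob (\<Inter>j. E j) \<le> prob (\<Inter>j<N. E j)"
      using E_sets by (intro finite_measure_mono) auto
    also have "\<dots> = Q ^ N"
      using standard_BM_windows_indep[OF BM a0 ab ba False] E_prob by (simp add: E_def)
    finally show ?thesis .
  qed simp
  moreover have "(\<lambda>N. Q ^ N) \<longlonglongrightarrow> 0"
    using std_normal_interval_lt_1[of c] by (intro LIMSEQ_power_zero) (simp add: Q_def)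
  ultimately have "prob (\<Inter>j. E j) \<le> 0" by (intro LIMSEQ_le_const) auto
  then show ?thesis
    using E_sets by (intro null_setsI) (auto simp: emeasure_eq_measure E_def[symmetric] measure_le_0_iff)
qed

lemma bounded_X_proc_imp_window_bound:
  fixes \<beta> :: "real \<Rightarrow> real"
  assumes p: "p > 0" and c: "c > 0"
    and traj: "ann_loewner_traj p (\<lambda>t. c * \<beta> t) phi" and phi0: "Im (phi 0) = p"
    and bdd: "bounded ((\<lambda>s. X_proc p phi (\<lambda>t. c * \<beta> t) s) ` {pi\<^sup>2 / p..})"
  obtains m :: nat
  where "\<And>r. 0 < r \<Longrightarrow> r \<le> 1 / 4 \<Longrightarrow> r \<le> p \<Longrightarrow> \<bar>\<beta> (p - r + r\<^sup>2) - \<beta> (p - r)\<bar> \<le> real m * r"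
proof -
  obtain M where M: "\<And>t. t \<in> {0..<p} \<Longrightarrow> \<bar>Re (phi t) - c * \<beta> t\<bar> \<le> M * (p - t)"
    using X_proc_bounded_imp_Re_bound[OF p bdd] by blast
  show ?thesis
  proof (rule that[of "nat \<lceil>10 * M / c\<rceil>"])
    fix r :: real assume r: "0 < r" "r \<le> 1 / 4" "r \<le> p"
    have "\<bar>c * \<beta> (p - r + r\<^sup>2) - c * \<beta> (p - r)\<bar> \<le> 10 * M * r"
      by (rule ann_loewner_window_increment[OF traj phi0]) (use M r in auto)
    then have "c * \<bar>\<beta> (p - r + r\<^sup>2) - \<beta> (p - r)\<bar> \<le> 10 * M * r"
      using c by (simp add: abs_mult flip: right_diff_distrib)
    then have "\<bar>\<beta> (p - r + r\<^sup>2) - \<beta> (p - r)\<bar> \<le> 10 * M / c * r"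
      using c by (simp add: field_simps)
    also have "\<dots> \<le> real (nat \<lceil>10 * M / c\<rceil>) * r"
      using r by (intro mult_right_mono) linarith+
    finally show "\<bar>\<beta> (p - r + r\<^sup>2) - \<beta> (p - r)\<bar> \<le> real (nat \<lceil>10 * M / c\<rceil>) * r" .
  qed
qed

definition window_radius :: "real \<Rightarrow> nat \<Rightarrow> real" where
  "window_radius p j = min p (1 / 4) / 2 ^ j"

lemma window_radius_bounds:
  assumes "p > 0"
  shows "0 < window_radius p j" "window_radius p j \<le> 1 / 4" "window_radius p j \<le> p"
    and "p - window_radius p j + (window_radius p j)\<^sup>2 < p - window_radius p (Suc j)"
proof -
  have "min p (1 / 4) / 2 ^ j \<le> min p (1 / 4) / 1" using assms by (intro divide_left_mono) auto
  then show r: "0 < window_radius p j" "window_radius p j \<le> 1 / 4" "window_radius p j \<le> p"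
    using assms by (auto simp: window_radius_def)
  have "window_radius p j * window_radius p j \<le> window_radius p j * (1 / 4)"
    using r by (intro mult_left_mono) auto
  moreover have "window_radius p (Suc j) = window_radius p j / 2" by (simp add: window_radius_def)
  ultimately show "p - window_radius p j + (window_radius p j)\<^sup>2 < p - window_radius p (Suc j)"
    using r unfolding power2_eq_square by linarith
qed

theorem lemma3p1:
  fixes M :: "'w measure" and B :: "real \<Rightarrow> 'w \<Rightarrow> real"
    and \<kappa> p :: real and z :: complex and phi :: "'w \<Rightarrow> real \<Rightarrow> complex"
  assumes BM: "standard_BM M B"
    and kappa: "\<kappa> > 0" and p: "p > 0"
    and z: "Im z = p"
    and sol: "\<forall>\<omega>\<in>space M. phi \<omega> 0 = z \<and>
      (\<forall>t\<in>{0..<p}. (phi \<omega> has_vector_derivative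
          H_ann (p - t) (phi \<omega> t - complex_of_real (sqrt \<kappa> * B t \<omega>))) (at t within {0..<p}))"
  shows "AE \<omega> in M. \<not> bounded ((\<lambda>s. X_proc p (phi \<omega>) (\<lambda>t. sqrt \<kappa> * B t \<omega>) s) ` {pi\<^sup>2 / p..})"
proof -
  define r where "r = window_radius p"
  define E where "E m = (\<Inter>j. {\<omega> \<in> space M.
    \<bar>B (p - r j + (r j)\<^sup>2) \<omega> - B (p - r j) \<omega>\<bar> \<le> real m * sqrt ((p - r j + (r j)\<^sup>2) - (p - r j))})" for m :: nat
  have "E m \<in> null_sets M" for m
    unfolding E_def
  proof (rule standard_BM_windows_null[OF BM])
    show "0 \<le> p - r 0" using window_radius_bounds(3)[OF p] by (simp add: r_def)
    show "p - r j < p - r j + (r j)\<^sup>2" for j using window_radius_bounds(1)[OF p, of j] by (simp add: r_def)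
  qed (simp add: r_def window_radius_bounds(4)[OF p])
  moreover have "\<omega> \<in> (\<Union>m. E m)"
    if \<omega>: "\<omega> \<in> space M" and bdd: "bounded ((\<lambda>s. X_proc p (phi \<omega>) (\<lambda>t. sqrt \<kappa> * B t \<omega>) s) ` {pi\<^sup>2 / p..})"
    for \<omega>
  proof -
    have "ann_loewner_traj p (\<lambda>t. sqrt \<kappa> * B t \<omega>) (phi \<omega>)" "Im (phi \<omega> 0) = p"
      using sol \<omega> z unfolding ann_loewner_traj_def by auto
    then obtain m where "\<And>\<rho>. 0 < \<rho> \<Longrightarrow> \<rho> \<le> 1 / 4 \<Longrightarrow> \<rho> \<le> p \<Longrightarrow>
        \<bar>B (p - \<rho> + \<rho>\<^sup>2) \<omega> - B (p - \<rho>) \<omega>\<bar> \<le> real m * \<rho>"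
      using bounded_X_proc_imp_window_bound[OF p _ _ _ bdd] kappa by auto
    then have "\<omega> \<in> E m" using \<omega> window_radius_bounds[OF p] by (simp add: E_def r_def abs_of_pos)
    then show ?thesis by blast
  qed
  ultimately show ?thesis by (intro AE_I'[of "\<Union>m. E m"]) auto
qed

end
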